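(* Let $q$ be an acyclic Boolean conjunctive query without self-join, let $F,G\in q$, let $z\in\mathit{vars}(q)$ and let $c$ be a constant. Let $q'=q[z\mapsto c]$, $F'=F[z\mapsto c]$ and $G'=G[z\mapsto c]$. Then: (1) $q'$ is acyclic; (2) if $F'$ attacks $G'$ in the attack graph of $q'$, then $F$ attacks $G$ in the attack graph of $q$; (3) if $F'$ attacks $G'$ in the attack graph of $q'$ and the attack $F\to G$ in the attack graph of $q$ is weak, then the attack $F'\to G'$ is weak.
   Context: Atoms $R(s_1,\dots,s_n)$ have variables or constants as arguments; each relation name has a signature $[n,k]$ with primary key positions $1,\dots,k$. $\mathit{key}(F)$ is the set of variables in the primary-key positions of atom $F$, $\mathit{vars}(F)$ the set of variables of $F$. A Boolean conjunctive query $q$ is a finite set of atoms; $\mathit{vars}(q)$ its variables; it has a self-join if a relation name occurs in two of its atoms. For a query or atom $X$, $X[z\mapsto c]$ denotes the result of replacing every occurrence of variable $z$ by constant $c$. A join tree for $q$ is an undirected tree on the atoms of $q$ such that whenever a variable occurs in atoms $F$ and $G$ it occurs in every atom on the path between them; the edge between $F$ and $G$ is labeled $\mathit{vars}(F)\cap\mathit{vars}(G)$. $q$ is acyclic if it has a join tree. $\mathit{FD}(q)=\{\mathit{key}(F)\to\mathit{vars}(F)\mid F\in q\}$; $F^{+,q}=\{x\in\mathit{vars}(q)\mid \mathit{FD}(q\setminus\{F\})\models\mathit{key}(F)\to x\}$; $F^{\oplus,q}=\{x\in\mathit{vars}(q)\mid \mathit{FD}(q)\models\mathit{key}(F)\to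 x\}$. The attack graph of an acyclic $q$, computed from any join tree $\tau$ (independent of the choice), has an edge (attack) $F\to G$ for distinct atoms iff every label $L$ on the path between $F$ and $G$ in $\tau$ satisfies $L\not\subseteq F^{+,q}$. An attack $F\to G$ is weak if $\mathit{key}(G)\subseteq F^{\oplus,q}$, strong otherwise. *)

theory Defs
  imports Main
begin

datatype ('v, 'c) qterm = Var 'v | Cst 'c

datatype ('r, 'v, 'c) atom = Atom 'r "('v, 'c) qterm list"

fun rel :: "('r, 'v, 'c) atom \<Rightarrow> 'r" where
  "rel (Atom R ts) = R"

fun args :: "('r, 'v, 'c) atom \<Rightarrow> ('v, 'c) qterm list" where
  "args (Atom R ts) = ts"

text \<open>A signature assigns to each relation name a pair (n,k): arity n, primary key
  positions 1..k.\<close>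
type_synonym 'r signature = "'r \<Rightarrow> nat \<times> nat"

definition wf_atom :: "'r signature \<Rightarrow> ('r, 'v, 'c) atom \<Rightarrow> bool" where
  "wf_atom sig F \<longleftrightarrow> length (args F) = fst (sig (rel F))
      \<and> 1 \<le> snd (sig (rel F)) \<and> snd (sig (rel F)) \<le> fst (sig (rel F))"

definition wf_query :: "'r signature \<Rightarrow> ('r, 'v, 'c) atom set \<Rightarrow> bool" where
  "wf_query sig q \<longleftrightarrow> finite q \<and> (\<forall>F\<in>q. wf_atom sig F)"

definition term_vars :: "('v, 'c) qterm list \<Rightarrow> 'v set" where
  "term_vars ts = {v. Var v \<in> set ts}"

definition avars :: "('r, 'v, 'c) atom \<Rightarrow> 'v set" where
  "avars F = term_vars (args F)"

definition key :: "'r signature \<Rightarrow> ('r, 'v, 'c) atom \<Rightarrow> 'v set" where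
  "key sig F = term_vars (take (snd (sig (rel F))) (args F))"

definition qvars :: "('r, 'v, 'c) atom set \<Rightarrow> 'v set" where
  "qvars q = (\<Union>F\<in>q. avars F)"

definition self_join_free :: "('r, 'v, 'c) atom set \<Rightarrow> bool" where
  "self_join_free q \<longleftrightarrow> (\<forall>F\<in>q. \<forall>G\<in>q. rel F = rel G \<longrightarrow> F = G)"

fun subst_term :: "'v \<Rightarrow> 'c \<Rightarrow> ('v, 'c) qterm \<Rightarrow> ('v, 'c) qterm" where
  "subst_term z c (Var v) = (if v = z then Cst c else Var v)"
| "subst_term z c (Cst d) = Cst d"

fun subst_atom :: "'v \<Rightarrow> 'c \<Rightarrow> ('r, 'v, 'c) atom \<Rightarrow> ('r, 'v, 'c) atom" where
  "subst_atom z c (Atom R ts) = Atom R (map (subst_term z c) ts)"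

definition subst_query :: "'v \<Rightarrow> 'c \<Rightarrow> ('r, 'v, 'c) atom set \<Rightarrow> ('r, 'v, 'c) atom set" where
  "subst_query z c q = subst_atom z c ` q"

text \<open>Undirected graphs are given by sets of 2-element edges. A simple path from u to v.\<close>
definition simple_path :: "'a set set \<Rightarrow> 'a list \<Rightarrow> 'a \<Rightarrow> 'a \<Rightarrow> bool" where
  "simple_path E p u v \<longleftrightarrow> p \<noteq> [] \<and> hd p = u \<and> last p = v \<and> distinct p
     \<and> (\<forall>i. Suc i < length p \<longrightarrow> {p ! i, p ! Suc i} \<in> E)"

definition is_tree :: "'a set \<Rightarrow> 'a set set \<Rightarrow> bool" where
  "is_tree V E \<longleftrightarrow> (\<forall>e\<in>E. \<exists>u\<in>V. \<exists>v\<in>V. u \<noteq> v \<and> e = {u, v})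
     \<and> (\<forall>u\<in>V. \<forall>v\<in>V. \<exists>!p. simple_path E p u v)"

definition join_tree :: "('r, 'v, 'c) atom set \<Rightarrow> ('r, 'v, 'c) atom set set \<Rightarrow> bool" where
  "join_tree q \<tau> \<longleftrightarrow> is_tree q \<tau> \<and>
     (\<forall>F\<in>q. \<forall>G\<in>q. \<forall>x \<in> avars F \<inter> avars G. \<forall>p. simple_path \<tau> p F G \<longrightarrow>
        (\<forall>H\<in>set p. x \<in> avars H))"

definition acyclic_query :: "('r, 'v, 'c) atom set \<Rightarrow> bool" where
  "acyclic_query q \<longleftrightarrow> (\<exists>\<tau>. join_tree q \<tau>)"

text \<open>A functional dependency X \<rightarrow> Y over variables; a relation instance is a set of tuples,
  i.e. functions from variables (attributes) to values.\<close>
type_synonym 'v fd = "'v set \<times> 'v set"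

definition fd_holds :: "('v \<Rightarrow> nat) set \<Rightarrow> 'v fd \<Rightarrow> bool" where
  "fd_holds r fd \<longleftrightarrow> (\<forall>t1\<in>r. \<forall>t2\<in>r. (\<forall>x\<in>fst fd. t1 x = t2 x) \<longrightarrow> (\<forall>y\<in>snd fd. t1 y = t2 y))"

definition fd_entails :: "'v fd set \<Rightarrow> 'v fd \<Rightarrow> bool" where
  "fd_entails \<Sigma> fd \<longleftrightarrow> (\<forall>r. (\<forall>d\<in>\<Sigma>. fd_holds r d) \<longrightarrow> fd_holds r fd)"

definition FDs :: "'r signature \<Rightarrow> ('r, 'v, 'c) atom set \<Rightarrow> 'v fd set" where
  "FDs sig q = {(key sig F, avars F) | F. F \<in> q}"

definition plus_closure :: "'r signature \<Rightarrow> ('r, 'v, 'c) atom set \<Rightarrow> ('r, 'v, 'c) atom \<Rightarrow> 'v set" where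
  "plus_closure sig q F = {x \<in> qvars q. fd_entails (FDs sig (q - {F})) (key sig F, {x})}"

definition oplus_closure :: "'r signature \<Rightarrow> ('r, 'v, 'c) atom set \<Rightarrow> ('r, 'v, 'c) atom \<Rightarrow> 'v set" where
  "oplus_closure sig q F = {x \<in> qvars q. fd_entails (FDs sig q) (key sig F, {x})}"

definition attacks_via :: "'r signature \<Rightarrow> ('r, 'v, 'c) atom set \<Rightarrow> ('r, 'v, 'c) atom set set
    \<Rightarrow> ('r, 'v, 'c) atom \<Rightarrow> ('r, 'v, 'c) atom \<Rightarrow> bool" where
  "attacks_via sig q \<tau> F G \<longleftrightarrow> F \<in> q \<and> G \<in> q \<and> F \<noteq> G \<and>
     (\<forall>p. simple_path \<tau> p F G \<longrightarrow>
        (\<forall>i. Suc i < length p \<longrightarrow> \<not> (avars (p ! i) \<inter> avars (p ! Suc i) \<subseteq> plus_closure sig q F)))"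

text \<open>Attack in the attack graph of an acyclic query (the choice of join tree is irrelevant).\<close>
definition attacks :: "'r signature \<Rightarrow> ('r, 'v, 'c) atom set
    \<Rightarrow> ('r, 'v, 'c) atom \<Rightarrow> ('r, 'v, 'c) atom \<Rightarrow> bool" where
  "attacks sig q F G \<longleftrightarrow> (\<exists>\<tau>. join_tree q \<tau> \<and> attacks_via sig q \<tau> F G)"

definition weak_attack :: "'r signature \<Rightarrow> ('r, 'v, 'c) atom set
    \<Rightarrow> ('r, 'v, 'c) atom \<Rightarrow> ('r, 'v, 'c) atom \<Rightarrow> bool" where
  "weak_attack sig q F G \<longleftrightarrow> attacks sig q F G \<and> key sig G \<subseteq> oplus_closure sig q F"

end

theory Submission
  imports Defs
begin

text \<open>Without self-joins, substituting \<open>c\<close> for \<open>z\<close> is injective on atoms and merely deletes \<open>z\<close>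
  from every atom, key and functional dependency. Hence the image of a join tree of \<open>q\<close> is a join
  tree of \<open>q'\<close>, and closures can only grow (apart from losing \<open>z\<close>): a relation satisfying
  \<open>FD(q')\<close> satisfies \<open>FD(q)\<close> once \<open>z\<close> is made constant.
  An attack \<open>F' \<rightarrow> G'\<close> is witnessed by a path in some join tree of \<open>q'\<close>; pulled back to \<open>q\<close> it is a
  sequence of atoms in which consecutive atoms share a variable outside \<open>F\<^sup>+\<^sup>,\<^sup>q\<close>. In a join tree of
  \<open>q\<close> such a variable occurs all along the tree path between the two atoms, so concatenating these
  paths and removing cycles yields the path from \<open>F\<close> to \<open>G\<close>, with no label inside \<open>F\<^sup>+\<^sup>,\<^sup>q\<close>.\<close>

lemma simple_path_iff_successively:
  "simple_path E p u v \<longleftrightarrow>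
     p \<noteq> [] \<and> hd p = u \<and> last p = v \<and> distinct p \<and> successively (\<lambda>a b. {a, b} \<in> E) p"
  by (simp add: simple_path_def successively_conv_nth)

lemma successively_glue:
  assumes "successively P xs" "successively P ys" "xs \<noteq> []" "ys \<noteq> []" "last xs = hd ys"
  shows "successively P (xs @ tl ys)" "hd (xs @ tl ys) = hd xs" "last (xs @ tl ys) = last ys"
proof -
  have ys: "ys = hd ys # tl ys" using assms(4) by simp
  then have "successively P (hd ys # tl ys)" using assms(2) by simp
  then show "successively P (xs @ tl ys)"
    using assms(1,3,5) by (auto simp: successively_append_iff successively_Cons)
  show "hd (xs @ tl ys) = hd xs" using assms(3) by simp
  show "last (xs @ tl ys) = last ys"
    using assms(3-5) by (cases ys) auto
qed

lemma successively_distinct_shortcut: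
  assumes "successively P w" "w \<noteq> []"
  obtains p where "p \<noteq> []" "hd p = hd w" "last p = last w" "distinct p" "successively P p"
  using assms
proof (induction "length w" arbitrary: w rule: less_induct)
  case less
  show ?case
  proof (cases "distinct w")
    case True
    then show ?thesis using less.prems by blast
  next
    case False
    then obtain a x b c where w: "w = a @ [x] @ b @ [x] @ c"
      using not_distinct_decomp by blast
    let ?w = "a @ x # c"
    have "successively P ?w" "hd ?w = hd w" "last ?w = last w"
      using less.prems(2) unfolding w
      by (auto simp: successively_append_iff successively_Cons hd_append)
    then show ?thesis using less.hyps[of ?w] less.prems(1) unfolding w by force
  qed
qed

lemma simple_path_set_subset:
  assumes "\<forall>e\<in>E. e \<subseteq> V" "simple_path E p u v" "u \<in> V"
  shows "set p \<subseteq> V"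
proof
  fix x assume "x \<in> set p"
  then obtain i where i: "i < length p" "x = p ! i" by (auto simp: in_set_conv_nth)
  show "x \<in> V"
  proof (cases i)
    case 0
    then show ?thesis using assms(2,3) i by (auto simp: simple_path_def hd_conv_nth[symmetric])
  next
    case (Suc j)
    then have "{p ! j, p ! Suc j} \<in> E" using assms(2) i by (simp add: simple_path_def)
    then show ?thesis using assms(1) i Suc by blast
  qed
qed

lemma is_tree_edge_subset:
  assumes "is_tree V E" "e \<in> E"
  shows "e \<subseteq> V"
proof -
  obtain u v where "u \<in> V" "v \<in> V" "e = {u, v}"
    using assms unfolding is_tree_def by (elim conjE) (drule bspec, assumption, blast)
  then show ?thesis by simp
qed

lemma is_tree_unique_path:
  "is_tree V E \<Longrightarrow> u \<in> V \<Longrightarrow> v \<in> V \<Longrightarrow> \<exists>!p. simple_path E p u v"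
  unfolding is_tree_def by simp

lemma is_tree_path_exists:
  assumes "is_tree V E" "u \<in> V" "v \<in> V"
  obtains p where "simple_path E p u v"
  using is_tree_unique_path[OF assms] by blast

lemma is_tree_path_unique:
  assumes "is_tree V E" "u \<in> V" "v \<in> V" "simple_path E p u v" "simple_path E p' u v"
  shows "p = p'"
  using is_tree_unique_path[OF assms(1-3)] assms(4,5) by blast

lemma map_inv_into_preimage:
  assumes "set ys \<subseteq> f ` A"
  shows "set (map (inv_into A f) ys) \<subseteq> A" "map f (map (inv_into A f) ys) = ys"
  using assms by (auto simp: inv_into_into f_inv_into_f intro!: map_idI)

lemma image_edge_iff:
  assumes "inj_on f V" "\<forall>e\<in>E. e \<subseteq> V" "a \<in> V" "b \<in> V"
  shows "{f a, f b} \<in> (`) f ` E \<longleftrightarrow> {a, b} \<in> E"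
proof
  assume "{f a, f b} \<in> (`) f ` E"
  then obtain e where e: "e \<in> E" "f ` e = f ` {a, b}" by auto
  moreover have "e \<subseteq> V" "{a, b} \<subseteq> V" using assms e(1) by auto
  ultimately show "{a, b} \<in> E" using assms(1) by (metis inj_on_image_eq_iff)
next
  assume "{a, b} \<in> E"
  then have "f ` {a, b} \<in> (`) f ` E" by (rule imageI)
  then show "{f a, f b} \<in> (`) f ` E" by simp
qed

lemma simple_path_map_iff:
  assumes inj: "inj_on f V" and EV: "\<forall>e\<in>E. e \<subseteq> V"
    and "set p \<subseteq> V" "u \<in> V" "v \<in> V"
  shows "simple_path ((`) f ` E) (map f p) (f u) (f v) \<longleftrightarrow> simple_path E p u v"
proof -
  have "successively (\<lambda>a b. {f a, f b} \<in> (`) f ` E) p \<longleftrightarrow> successively (\<lambda>a b. {a, b} \<in> E) p"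
    using assms(3) by (intro successively_cong refl image_edge_iff[OF inj EV]) auto
  moreover have "distinct (map f p) \<longleftrightarrow> distinct p"
    using assms by (simp add: distinct_map inj_on_subset)
  moreover have "p \<noteq> [] \<Longrightarrow> f (hd p) = f u \<longleftrightarrow> hd p = u"
    using assms hd_in_set by (metis inj_on_eq_iff subsetD)
  moreover have "p \<noteq> [] \<Longrightarrow> f (last p) = f v \<longleftrightarrow> last p = v"
    using assms last_in_set by (metis inj_on_eq_iff subsetD)
  ultimately show ?thesis
    by (auto simp: simple_path_iff_successively successively_map hd_map last_map)
qed

lemma simple_path_image_pullback:
  assumes inj: "inj_on f V" and EV: "\<forall>e\<in>E. e \<subseteq> V" and uv: "u \<in> V" "v \<in> V"
    and p': "simple_path ((`) f ` E) p' (f u) (f v)"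
  obtains p where "p' = map f p" "set p \<subseteq> V" "simple_path E p u v"
proof -
  have "\<forall>e\<in>(`) f ` E. e \<subseteq> f ` V" using EV by blast
  then have "set p' \<subseteq> f ` V" using simple_path_set_subset[OF _ p'] uv(1) by blast
  define p where "p = map (inv_into V f) p'"
  have p: "set p \<subseteq> V" "p' = map f p"
    using map_inv_into_preimage[OF \<open>set p' \<subseteq> f ` V\<close>] unfolding p_def by auto
  have "simple_path E p u v" using p' simple_path_map_iff[OF inj EV p(1) uv] p(2) by simp
  with p that show ?thesis by blast
qed

lemma is_tree_image:
  assumes inj: "inj_on f V" and tree: "is_tree V E"
  shows "is_tree (f ` V) ((`) f ` E)"
  unfolding is_tree_def
proof (intro conjI ballI)
  fix e' assume "e' \<in> (`) f ` E"
  then obtain u v where "u \<in> V" "v \<in> V" "u \<noteq> v" "e' = {f u, f v}"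
    using tree unfolding is_tree_def by auto
  then show "\<exists>u\<in>f ` V. \<exists>v\<in>f ` V. u \<noteq> v \<and> e' = {u, v}"
    using inj by (auto dest: inj_onD)
next
  have EV: "\<forall>e\<in>E. e \<subseteq> V" using is_tree_edge_subset[OF tree] by blast
  fix u' v' assume "u' \<in> f ` V" "v' \<in> f ` V"
  then obtain u v where uv: "u \<in> V" "v \<in> V" "u' = f u" "v' = f v" by blast
  obtain p where p: "simple_path E p u v" using is_tree_path_exists[OF tree uv(1,2)] .
  have "simple_path ((`) f ` E) (map f p) u' v'"
    using simple_path_map_iff[OF inj EV simple_path_set_subset[OF EV p uv(1)] uv(1,2)] p uv by simp
  moreover have "p' = map f p" if p': "simple_path ((`) f ` E) p' u' v'" for p'
  proof -
    obtain p0 where "p' = map f p0" "simple_path E p0 u v"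
      using simple_path_image_pullback[OF inj EV uv(1,2)] p' uv(3,4) by blast
    then show ?thesis using is_tree_path_unique[OF tree uv(1,2) _ p] by simp
  qed
  ultimately show "\<exists>!p'. simple_path ((`) f ` E) p' u' v'" by blast
qed

abbreviation shares_var_outside :: "'v set \<Rightarrow> ('r, 'v, 'c) atom \<Rightarrow> ('r, 'v, 'c) atom \<Rightarrow> bool" where
  "shares_var_outside S H H' \<equiv> \<not> avars H \<inter> avars H' \<subseteq> S"

lemma join_tree_is_tree: "join_tree q \<tau> \<Longrightarrow> is_tree q \<tau>"
  by (simp add: join_tree_def)

lemma join_tree_path_keeps_var:
  assumes "join_tree q \<tau>" "F \<in> q" "G \<in> q" "x \<in> avars F" "x \<in> avars G"
    and "simple_path \<tau> p F G" "H \<in> set p"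
  shows "x \<in> avars H"
proof -
  have path_property: "\<forall>F\<in>q. \<forall>G\<in>q. \<forall>x \<in> avars F \<inter> avars G.
      \<forall>p. simple_path \<tau> p F G \<longrightarrow> (\<forall>H\<in>set p. x \<in> avars H)"
    using assms(1) unfolding join_tree_def by (rule conjunct2)
  show ?thesis by (rule path_property[rule_format, OF assms(2,3) IntI[OF assms(4,5)] assms(6,7)])
qed

lemma join_tree_walk:
  assumes jt: "join_tree q \<tau>"
  shows "set hs \<subseteq> q \<Longrightarrow> hs \<noteq> [] \<Longrightarrow> successively (shares_var_outside S) hs \<Longrightarrow>
    \<exists>w. w \<noteq> [] \<and> hd w = hd hs \<and> last w = last hs
      \<and> successively (\<lambda>H H'. {H, H'} \<in> \<tau> \<and> shares_var_outside S H H') w"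
proof (induction hs rule: induct_list012)
  case (2 F)
  then show ?case by (intro exI[of _ "[F]"]) simp
next
  case (3 F G hs)
  then obtain w where w: "w \<noteq> []" "hd w = G" "last w = last (G # hs)"
      "successively (\<lambda>H H'. {H, H'} \<in> \<tau> \<and> shares_var_outside S H H') w"
    by auto
  have FG: "F \<in> q" "G \<in> q" using "3.prems"(1) by auto
  obtain x where x: "x \<in> avars F" "x \<in> avars G" "x \<notin> S" using "3.prems"(3) by auto
  obtain P where P: "simple_path \<tau> P F G"
    using is_tree_path_exists[OF join_tree_is_tree[OF jt] FG] .
  have "\<forall>H\<in>set P. x \<in> avars H" using join_tree_path_keeps_var[OF jt FG x(1,2) P] by blast
  then have "successively (\<lambda>H H'. {H, H'} \<in> \<tau> \<and> shares_var_outside S H H') P"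
    using P x(3) unfolding simple_path_iff_successively
    by (auto elim!: successively_mono)
  then show ?case
    using successively_glue[OF _ w(4)] P w(1-3) unfolding simple_path_iff_successively
    by (intro exI[of _ "P @ tl w"]) auto
qed simp

lemma join_tree_path_labels:
  assumes jt: "join_tree q \<tau>" and hs: "set hs \<subseteq> q" "hs \<noteq> []"
    and labels: "successively (shares_var_outside S) hs"
    and p: "simple_path \<tau> p (hd hs) (last hs)"
  shows "successively (shares_var_outside S) p"
proof -
  obtain w where w: "w \<noteq> []" "hd w = hd hs" "last w = last hs"
      "successively (\<lambda>H H'. {H, H'} \<in> \<tau> \<and> shares_var_outside S H H') w"
    using join_tree_walk[OF jt hs labels] by blast
  obtain p0 where p0: "p0 \<noteq> []" "hd p0 = hd w" "last p0 = last w" "distinct p0"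
      "successively (\<lambda>H H'. {H, H'} \<in> \<tau> \<and> shares_var_outside S H H') p0"
    by (rule successively_distinct_shortcut[OF w(4,1)])
  have "successively (\<lambda>H H'. {H, H'} \<in> \<tau>) p0" using p0(5) by (rule successively_mono) simp
  then have "simple_path \<tau> p0 (hd hs) (last hs)"
    using p0(1-4) w(2,3) unfolding simple_path_iff_successively by simp
  moreover have "hd hs \<in> q" "last hs \<in> q" using hs by auto
  ultimately have "p = p0" using is_tree_path_unique[OF join_tree_is_tree[OF jt] _ _ p] by blast
  show ?thesis using p0(5) unfolding \<open>p = p0\<close> by (rule successively_mono) simp
qed

lemma term_vars_map_subst_term: "term_vars (map (subst_term z c) ts) = term_vars ts - {z}"
proof -
  have "Var v = subst_term z c t \<longleftrightarrow> t = Var v \<and> v \<noteq> z" for t v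
    by (cases t) auto
  then have "Var v \<in> set (map (subst_term z c) ts) \<longleftrightarrow> Var v \<in> set ts \<and> v \<noteq> z" for v
    by (simp add: image_iff)
  then show ?thesis unfolding term_vars_def by blast
qed

lemma rel_subst_atom [simp]: "rel (subst_atom z c F) = rel F"
  by (cases F) simp

lemma avars_subst_atom: "avars (subst_atom z c F) = avars F - {z}"
  by (cases F) (simp add: avars_def term_vars_map_subst_term)

lemma key_subst_atom: "key sig (subst_atom z c F) = key sig F - {z}"
  by (cases F) (simp add: key_def take_map term_vars_map_subst_term)

lemma inj_on_subst_atom: "self_join_free q \<Longrightarrow> inj_on (subst_atom z c) q"
  unfolding self_join_free_def inj_on_def by (metis rel_subst_atom)

lemma qvars_subst_query: "qvars (subst_query z c q) = qvars q - {z}"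
  by (auto simp: qvars_def subst_query_def avars_subst_atom)

lemma FDs_eq_image: "FDs sig q = (\<lambda>F. (key sig F, avars F)) ` q"
  by (auto simp: FDs_def)

lemma FDs_subst_query:
  "FDs sig (subst_query z c q) = (\<lambda>(X, Y). (X - {z}, Y - {z})) ` FDs sig q"
  by (simp add: FDs_eq_image subst_query_def image_image key_subst_atom avars_subst_atom)

lemma fd_entails_remove_attribute:
  assumes "fd_entails \<Sigma> (X, Y)"
  shows "fd_entails ((\<lambda>(A, B). (A - {z}, B - {z})) ` \<Sigma>) (X - {z}, Y - {z})"
  unfolding fd_entails_def
proof (intro allI impI)
  fix r :: "('a \<Rightarrow> nat) set"
  assume r: "\<forall>d\<in>(\<lambda>(A, B). (A - {z}, B - {z})) ` \<Sigma>. fd_holds r d"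
  let ?r = "(\<lambda>t. t(z := 0)) ` r"
  \<comment> \<open>On \<open>?r\<close> the attribute \<open>z\<close> is constant, so it never separates two tuples.\<close>
  have fd_holds_reduced: "fd_holds ?r (A, B) \<longleftrightarrow> fd_holds r (A - {z}, B - {z})" for A B
    unfolding fd_holds_def by simp (simp add: Ball_def imp_conjL)
  have "fd_holds ?r d" if "d \<in> \<Sigma>" for d
    using bspec[OF r imageI[OF that]] by (cases d) (simp add: fd_holds_reduced)
  then have "fd_holds ?r (X, Y)" using assms unfolding fd_entails_def by blast
  then show "fd_holds r (X - {z}, Y - {z})" by (simp add: fd_holds_reduced)
qed

lemma subst_query_Diff_singleton:
  assumes "inj_on (subst_atom z c) q" "F \<in> q"
  shows "subst_query z c (q - {F}) = subst_query z c q - {subst_atom z c F}"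
  using inj_on_image_set_diff[OF assms(1), of q "{F}"] assms(2) by (simp add: subst_query_def)

lemma plus_closure_subst:
  assumes "inj_on (subst_atom z c) q" "F \<in> q"
  shows "plus_closure sig q F - {z} \<subseteq> plus_closure sig (subst_query z c q) (subst_atom z c F)"
proof
  fix x assume x: "x \<in> plus_closure sig q F - {z}"
  then have "fd_entails (FDs sig (subst_query z c (q - {F}))) (key sig F - {z}, {x} - {z})"
    unfolding plus_closure_def FDs_subst_query by (blast intro: fd_entails_remove_attribute)
  then show "x \<in> plus_closure sig (subst_query z c q) (subst_atom z c F)"
    using x by (simp add: plus_closure_def qvars_subst_query key_subst_atom insert_Diff_if
        subst_query_Diff_singleton[OF assms])
qed

lemma oplus_closure_subst:
  "oplus_closure sig q F - {z} \<subseteq> oplus_closure sig (subst_query z c q) (subst_atom z c F)"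
proof
  fix x assume x: "x \<in> oplus_closure sig q F - {z}"
  then have "fd_entails (FDs sig (subst_query z c q)) (key sig F - {z}, {x} - {z})"
    unfolding oplus_closure_def FDs_subst_query by (blast intro: fd_entails_remove_attribute)
  then show "x \<in> oplus_closure sig (subst_query z c q) (subst_atom z c F)"
    using x by (simp add: oplus_closure_def qvars_subst_query key_subst_atom insert_Diff_if)
qed

lemma join_tree_subst:
  assumes inj: "inj_on (subst_atom z c) q" and jt: "join_tree q \<tau>"
  shows "join_tree (subst_query z c q) ((`) (subst_atom z c) ` \<tau>)"
  unfolding join_tree_def subst_query_def
proof (intro conjI ballI allI impI)
  let ?f = "subst_atom z c"
  have tree: "is_tree q \<tau>" using jt by (rule join_tree_is_tree)
  show "is_tree (?f ` q) ((`) ?f ` \<tau>)" using inj tree by (rule is_tree_image)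
  fix F' G' x p' H'
  assume "F' \<in> ?f ` q" "G' \<in> ?f ` q" and x: "x \<in> avars F' \<inter> avars G'"
    and p': "simple_path ((`) ?f ` \<tau>) p' F' G'" and "H' \<in> set p'"
  then obtain F G where FG: "F \<in> q" "G \<in> q" "F' = ?f F" "G' = ?f G" by blast
  have EV: "\<forall>e\<in>\<tau>. e \<subseteq> q" using is_tree_edge_subset[OF tree] by blast
  obtain p where p: "p' = map ?f p" "simple_path \<tau> p F G"
    using simple_path_image_pullback[OF inj EV FG(1,2)] p' FG(3,4) by blast
  then obtain H where H: "H \<in> set p" "H' = ?f H" using \<open>H' \<in> set p'\<close> by auto
  have "x \<in> avars F" "x \<in> avars G" "x \<noteq> z" using x FG(3,4) by (auto simp: avars_subst_atom)
  then show "x \<in> avars H'"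
    using join_tree_path_keeps_var[OF jt FG(1,2) _ _ p(2) H(1)] H(2) by (simp add: avars_subst_atom)
qed

lemma acyclic_query_subst:
  assumes "self_join_free q" "acyclic_query q"
  shows "acyclic_query (subst_query z c q)"
proof -
  obtain \<tau> where "join_tree q \<tau>" using assms(2) unfolding acyclic_query_def by blast
  then show ?thesis
    unfolding acyclic_query_def using join_tree_subst[OF inj_on_subst_atom[OF assms(1)]] by blast
qed

lemma attacks_via_iff_successively:
  "attacks_via sig q \<tau> F G \<longleftrightarrow> F \<in> q \<and> G \<in> q \<and> F \<noteq> G \<and>
     (\<forall>p. simple_path \<tau> p F G \<longrightarrow> successively (shares_var_outside (plus_closure sig q F)) p)"
  by (simp add: attacks_via_def successively_conv_nth)

lemma attacks_subst_reflect:
  assumes sjf: "self_join_free q" and acyclic: "acyclic_query q" and FG: "F \<in> q" "G \<in> q"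
    and attack: "attacks sig (subst_query z c q) (subst_atom z c F) (subst_atom z c G)"
  shows "attacks sig q F G"
proof -
  let ?f = "subst_atom z c" and ?q' = "subst_query z c q"
  have inj: "inj_on ?f q" using sjf by (rule inj_on_subst_atom)
  obtain \<tau> where jt: "join_tree q \<tau>" using acyclic unfolding acyclic_query_def by blast
  obtain \<tau>' where jt': "join_tree ?q' \<tau>'" and attack': "attacks_via sig ?q' \<tau>' (?f F) (?f G)"
    using attack unfolding attacks_def by blast
  have tree': "is_tree ?q' \<tau>'" using jt' by (rule join_tree_is_tree)
  have FG': "?f F \<in> ?q'" "?f G \<in> ?q'" using FG by (auto simp: subst_query_def)
  obtain p' where p': "simple_path \<tau>' p' (?f F) (?f G)"
    using is_tree_path_exists[OF tree' FG'] .
  have "set p' \<subseteq> ?f ` q"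
    using simple_path_set_subset[OF _ p' FG'(1)] is_tree_edge_subset[OF tree']
    by (auto simp: subst_query_def)
  define hs where "hs = map (inv_into q ?f) p'"
  have hs: "set hs \<subseteq> q" "p' = map ?f hs"
    using map_inv_into_preimage[OF \<open>set p' \<subseteq> ?f ` q\<close>] unfolding hs_def by auto
  have ne: "hs \<noteq> []" and "?f (hd hs) = ?f F" "?f (last hs) = ?f G"
    using p' unfolding hs(2) simple_path_def by (auto simp: hd_map last_map)
  moreover have "hd hs \<in> q" "last hs \<in> q" using hs(1) ne by auto
  ultimately have ends: "hs \<noteq> []" "hd hs = F" "last hs = G"
    using FG inj by (auto simp: inj_on_eq_iff)
  \<comment> \<open>A variable shared outside \<open>F\<^sup>+\<close> in \<open>q'\<close> differs from \<open>z\<close>, so it is also outside \<open>F\<^sup>+\<close> in \<open>q\<close>.\<close>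
  have "successively (shares_var_outside (plus_closure sig ?q' (?f F))) p'"
    using attack' p' by (simp add: attacks_via_iff_successively)
  then have "successively (shares_var_outside (plus_closure sig q F)) hs"
    unfolding hs(2) successively_map
    by (rule successively_mono) (use plus_closure_subst[OF inj FG(1)] in \<open>auto simp: avars_subst_atom\<close>)
  moreover have "F \<noteq> G" using attack' by (auto simp: attacks_via_def)
  ultimately have "attacks_via sig q \<tau> F G"
    using join_tree_path_labels[OF jt hs(1) ends(1)] ends FG
    by (simp add: attacks_via_iff_successively)
  with jt show ?thesis unfolding attacks_def by blast
qed

lemma weak_attack_subst:
  assumes "attacks sig (subst_query z c q) (subst_atom z c F) (subst_atom z c G)"
    and "weak_attack sig q F G"
  shows "weak_attack sig (subst_query z c q) (subst_atom z c F) (subst_atom z c G)"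
  using assms oplus_closure_subst[of sig q F z c]
  by (auto simp: weak_attack_def key_subst_atom)

theorem lemma5:
  fixes sig :: "'r signature"
    and q :: "('r, 'v, 'c) atom set"
    and F G :: "('r, 'v, 'c) atom"
    and z :: 'v and c :: 'c
  assumes "wf_query sig q"
    and "acyclic_query q"
    and "self_join_free q"
    and "F \<in> q" and "G \<in> q"
    and "z \<in> qvars q"
  shows "acyclic_query (subst_query z c q)
    \<and> (attacks sig (subst_query z c q) (subst_atom z c F) (subst_atom z c G)
         \<longrightarrow> attacks sig q F G)
    \<and> (attacks sig (subst_query z c q) (subst_atom z c F) (subst_atom z c G)
         \<and> weak_attack sig q F G
         \<longrightarrow> weak_attack sig (subst_query z c q) (subst_atom z c F) (subst_atom z c G))"
  by (simp add: acyclic_query_subst[OF assms(3,2)] attacks_subst_reflect[OF assms(3,2,4,5)]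
      weak_attack_subst)

end
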